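(* The set $M = \{z = 0,\ p_z = 0,\ p_\theta = 0\}$ (with $p_\theta = x p_y - y p_x$) is invariant under the Hamiltonian flow of the Kepler–Heisenberg Hamiltonian $H$. Along any solution in $M$ with energy $h$, the function $r(t) = \sqrt{x(t)^2+y(t)^2}$ satisfies that the graph $\{(t, r(t))\}$ lies on a conic in the $(t,r)$-plane which is a hyperbola if $h>0$, an ellipse if $h<0$, and a parabola if $h=0$.
   Context: Phase space is $T^*\mathbb R^3$ with coordinates $(x,y,z,p_x,p_y,p_z)$. Set $P_X = p_x - \tfrac12 y p_z$, $P_Y = p_y + \tfrac12 x p_z$. The Kepler–Heisenberg Hamiltonian is $H = \tfrac12(P_X^2 + P_Y^2) - \frac{1}{8\pi\sqrt{(x^2+y^2)^2+16z^2}}$, defined away from $x=y=z=0$. *)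

theory Defs
  imports "HOL-Analysis.Analysis"
begin

definition KH :: "real^3 \<Rightarrow> real^3 \<Rightarrow> real" where
  "KH q p =
     (let x = q$1; y = q$2; z = q$3; px = p$1; py = p$2; pz = p$3;
          PX = px - y * pz / 2; PY = py + x * pz / 2
      in (PX^2 + PY^2) / 2 - 1 / (8 * pi * sqrt ((x^2 + y^2)^2 + 16 * z^2)))"

text \<open>(q,p) is a solution of Hamilton's equations q' = dH/dp, p' = - dH/dq on the set I.\<close>
definition hamiltonian_solution ::
  "(real^3 \<Rightarrow> real^3 \<Rightarrow> real) \<Rightarrow> real set \<Rightarrow> (real \<Rightarrow> real^3) \<Rightarrow> (real \<Rightarrow> real^3) \<Rightarrow> bool" where
  "hamiltonian_solution H I q p \<longleftrightarrow>
     (\<forall>t\<in>I. \<exists>dq dp.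
        (q has_vector_derivative dq) (at t) \<and>
        (p has_vector_derivative dp) (at t) \<and>
        ((\<lambda>v. H (q t) v) has_derivative (\<lambda>v. dq \<bullet> v)) (at (p t)) \<and>
        ((\<lambda>u. H u (p t)) has_derivative (\<lambda>u. - (dp \<bullet> u))) (at (q t)))"

text \<open>Solution of the Kepler-Heisenberg flow on an open interval I, avoiding the singularity x=y=z=0.\<close>
definition KH_solution :: "real set \<Rightarrow> (real \<Rightarrow> real^3) \<Rightarrow> (real \<Rightarrow> real^3) \<Rightarrow> bool" where
  "KH_solution I q p \<longleftrightarrow> open I \<and> is_interval I \<and> I \<noteq> {} \<and>
     (\<forall>t\<in>I. q t \<noteq> 0) \<and> hamiltonian_solution KH I q p"

definition inM :: "real^3 \<Rightarrow> real^3 \<Rightarrow> bool" where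
  "inM q p \<longleftrightarrow> q$3 = 0 \<and> p$3 = 0 \<and> q$1 * p$2 - q$2 * p$1 = 0"

definition conic_set :: "real \<Rightarrow> real \<Rightarrow> real \<Rightarrow> real \<Rightarrow> real \<Rightarrow> real \<Rightarrow> (real \<times> real) set" where
  "conic_set A B C D E F = {(t, r). A * t^2 + B * t * r + C * r^2 + D * t + E * r + F = 0}"

text \<open>Determinant of the symmetric 3x3 matrix [[A,B/2,D/2],[B/2,C,E/2],[D/2,E/2,F]];
  the conic is non-degenerate iff it is non-zero.\<close>
definition conic_det :: "real \<Rightarrow> real \<Rightarrow> real \<Rightarrow> real \<Rightarrow> real \<Rightarrow> real \<Rightarrow> real" where
  "conic_det A B C D E F =
     A * (C * F - (E/2)^2) - (B/2) * ((B/2) * F - (E/2) * (D/2)) + (D/2) * ((B/2) * (E/2) - C * (D/2))"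

definition is_hyperbola :: "real \<Rightarrow> real \<Rightarrow> real \<Rightarrow> real \<Rightarrow> real \<Rightarrow> real \<Rightarrow> bool" where
  "is_hyperbola A B C D E F \<longleftrightarrow> conic_det A B C D E F \<noteq> 0 \<and> B^2 - 4 * A * C > 0"

definition is_parabola :: "real \<Rightarrow> real \<Rightarrow> real \<Rightarrow> real \<Rightarrow> real \<Rightarrow> real \<Rightarrow> bool" where
  "is_parabola A B C D E F \<longleftrightarrow> conic_det A B C D E F \<noteq> 0 \<and> B^2 - 4 * A * C = 0"

text \<open>Real (non-empty) non-degenerate ellipse.\<close>
definition is_ellipse :: "real \<Rightarrow> real \<Rightarrow> real \<Rightarrow> real \<Rightarrow> real \<Rightarrow> real \<Rightarrow> bool" where
  "is_ellipse A B C D E F \<longleftrightarrow> conic_det A B C D E F \<noteq> 0 \<and> B^2 - 4 * A * C < 0 \<and>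
     conic_set A B C D E F \<noteq> {}"

definition lies_on_hyperbola :: "(real \<times> real) set \<Rightarrow> bool" where
  "lies_on_hyperbola S \<longleftrightarrow> (\<exists>A B C D E F. is_hyperbola A B C D E F \<and> S \<subseteq> conic_set A B C D E F)"

definition lies_on_parabola :: "(real \<times> real) set \<Rightarrow> bool" where
  "lies_on_parabola S \<longleftrightarrow> (\<exists>A B C D E F. is_parabola A B C D E F \<and> S \<subseteq> conic_set A B C D E F)"

definition lies_on_ellipse :: "(real \<times> real) set \<Rightarrow> bool" where
  "lies_on_ellipse S \<longleftrightarrow> (\<exists>A B C D E F. is_ellipse A B C D E F \<and> S \<subseteq> conic_set A B C D E F)"

end

theory Submission
  imports Defs
begin

(* The angular momentum p_theta = x p_y - y p_x is a first integral of KH. Where p_theta = 0,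
   Hamilton's equations give z' = p_z (x^2 + y^2) / 4 and p_z' = -2 z / (pi rho^3), with
   rho = sqrt ((x^2 + y^2)^2 + 16 z^2), so E = z^2 + p_z^2 satisfies |E'| <= L E with L continuous;
   a Gronwall argument shows that E cannot leave 0, which is the invariance of M.
   On M the flow is planar motion in the potential -k / r^2 with k = 1 / (8 pi). For such a
   potential the virial identity reads (d/dt)^2 r^2 = 4 h, so r^2 = 2 h t^2 + b t + c, and
   b^2 - 8 h c = 8 k - 4 p_theta^2 = 1 / pi. Hence the graph lies on the conic
   r^2 - 2 h t^2 - b t - c = 0, which is nondegenerate and whose discriminant 8 h decides its
   type. *)

lemma has_derivative_inner_axis_component:
  fixes x d :: "real^'n"
  assumes "(f has_derivative (\<lambda>v. d \<bullet> v)) (at x)"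
    and "((\<lambda>s. f (x + s *\<^sub>R axis i 1)) has_real_derivative c) (at 0)"
  shows "d $ i = c"
proof -
  have "((\<lambda>s::real. x + s *\<^sub>R axis i 1) has_derivative (\<lambda>s. s *\<^sub>R axis i 1)) (at 0)"
    by (auto intro!: derivative_eq_intros)
  from has_derivative_compose[OF this, of f "\<lambda>v. d \<bullet> v"] assms(1)
  have "((\<lambda>s. f (x + s *\<^sub>R axis i 1)) has_real_derivative d $ i) (at 0)"
    by (simp add: has_field_derivative_def inner_axis mult_commute_abs)
  from DERIV_unique[OF this assms(2)] show ?thesis .
qed

lemma hamiltonian_solution_coordinate_derivatives:
  assumes "hamiltonian_solution H I q p" "t \<in> I"
    and "((\<lambda>s. H (q t) (p t + s *\<^sub>R axis i 1)) has_real_derivative Hp) (at 0)"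
    and "((\<lambda>s. H (q t + s *\<^sub>R axis i 1) (p t)) has_real_derivative Hq) (at 0)"
  shows "((\<lambda>t. q t $ i) has_real_derivative Hp) (at t)"
    and "((\<lambda>t. p t $ i) has_real_derivative - Hq) (at t)"
proof -
  obtain dq dp where
    dq: "(q has_vector_derivative dq) (at t)" and dp: "(p has_vector_derivative dp) (at t)" and
    Hp: "((\<lambda>v. H (q t) v) has_derivative (\<lambda>v. dq \<bullet> v)) (at (p t))" and
    Hq: "((\<lambda>u. H u (p t)) has_derivative (\<lambda>u. - (dp \<bullet> u))) (at (q t))"
    using assms(1,2) unfolding hamiltonian_solution_def by blast
  have Hq': "((\<lambda>u. H u (p t)) has_derivative (\<lambda>u. (- dp) \<bullet> u)) (at (q t))"
    using Hq by simp
  have "((\<lambda>t. q t $ i) has_real_derivative dq $ i) (at t)"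
    "((\<lambda>t. p t $ i) has_real_derivative dp $ i) (at t)"
    using bounded_linear.has_vector_derivative[OF bounded_linear_vec_nth] dq dp
    by (auto simp: has_real_derivative_iff_has_vector_derivative)
  then show "((\<lambda>t. q t $ i) has_real_derivative Hp) (at t)"
    and "((\<lambda>t. p t $ i) has_real_derivative - Hq) (at t)"
    using has_derivative_inner_axis_component[OF Hp assms(3)]
      has_derivative_inner_axis_component[OF Hq' assms(4)] by auto
qed

lemma is_interval_derivative_zero_eq:
  fixes f :: "real \<Rightarrow> real"
  assumes "is_interval I" "\<And>s. s \<in> I \<Longrightarrow> (f has_real_derivative 0) (at s)" "t0 \<in> I" "t \<in> I"
  shows "f t = f t0"
proof -
  obtain c where "\<forall>s\<in>I. f s = c"
    using has_field_derivative_zero_constant[of I f] assms(1,2)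
    by (auto simp: is_interval_convex has_field_derivative_at_within)
  with assms(3,4) show ?thesis by simp
qed

lemma zero_if_derivative_le_forward:
  fixes E E' :: "real \<Rightarrow> real"
  assumes "a \<le> b" "E a = 0" "E b \<ge> 0"
    and "\<And>s. s \<in> {a..b} \<Longrightarrow> (E has_real_derivative E' s) (at s)"
    and "\<And>s. s \<in> {a..b} \<Longrightarrow> E' s \<le> C * E s"
  shows "E b = 0"
proof -
  have "E b * exp (- C * b) \<le> E a * exp (- C * a)"
  proof (rule DERIV_nonpos_imp_nonincreasing[OF assms(1)])
    fix s assume "a \<le> s" "s \<le> b"
    then have "((\<lambda>s. E s * exp (- C * s)) has_real_derivative
        (E' s - C * E s) * exp (- C * s)) (at s)" "(E' s - C * E s) * exp (- C * s) \<le> 0"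
      using assms(4,5)[of s] by (auto intro!: derivative_eq_intros mult_nonpos_nonneg
          simp: algebra_simps)
    then show "\<exists>y. ((\<lambda>s. E s * exp (- C * s)) has_real_derivative y) (at s) \<and> y \<le> 0"
      by blast
  qed
  with assms(2,3) show ?thesis by (simp add: mult_le_0_iff)
qed

lemma zero_if_derivative_ge_backward:
  fixes E E' :: "real \<Rightarrow> real"
  assumes "a \<le> b" "E b = 0" "E a \<ge> 0"
    and "\<And>s. s \<in> {a..b} \<Longrightarrow> (E has_real_derivative E' s) (at s)"
    and "\<And>s. s \<in> {a..b} \<Longrightarrow> - E' s \<le> C * E s"
  shows "E a = 0"
proof -
  have "E a * exp (C * a) \<le> E b * exp (C * b)"
  proof (rule DERIV_nonneg_imp_nondecreasing[OF assms(1)])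
    fix s assume "a \<le> s" "s \<le> b"
    then have "((\<lambda>s. E s * exp (C * s)) has_real_derivative
        (E' s + C * E s) * exp (C * s)) (at s)"
      using assms(4)[of s] by (auto intro!: derivative_eq_intros simp: algebra_simps)
    moreover have "(E' s + C * E s) * exp (C * s) \<ge> 0"
      using assms(5)[of s] \<open>a \<le> s\<close> \<open>s \<le> b\<close> by simp
    ultimately show "\<exists>y. ((\<lambda>s. E s * exp (C * s)) has_real_derivative y) (at s) \<and> y \<ge> 0"
      by blast
  qed
  with assms(2,3) show ?thesis by (simp add: mult_le_0_iff)
qed

lemma zero_if_abs_derivative_le:
  fixes E E' L :: "real \<Rightarrow> real"
  assumes I: "is_interval I" and t0: "t0 \<in> I" and t: "t \<in> I" and "E t0 = 0"
    and nonneg: "\<And>s. s \<in> I \<Longrightarrow> E s \<ge> 0"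
    and deriv: "\<And>s. s \<in> I \<Longrightarrow> (E has_real_derivative E' s) (at s)"
    and bound: "\<And>s. s \<in> I \<Longrightarrow> \<bar>E' s\<bar> \<le> L s * E s"
    and "continuous_on I L"
  shows "E t = 0"
proof -
  define a b where "a = min t t0" and "b = max t t0"
  have "a \<le> b" unfolding a_def b_def by simp
  have sub: "{a..b} \<subseteq> I"
  proof
    fix s assume "s \<in> {a..b}"
    moreover have "a \<in> I" "b \<in> I" using t t0 unfolding a_def b_def min_def max_def by auto
    ultimately show "s \<in> I" by (intro mem_is_interval_1_I[OF I \<open>a \<in> I\<close> \<open>b \<in> I\<close>]) auto
  qed
  obtain C where C: "\<And>s. s \<in> {a..b} \<Longrightarrow> L s \<le> C"
    using compact_imp_bounded[OF compact_continuous_image[OF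
          continuous_on_subset[OF \<open>continuous_on I L\<close> sub] compact_Icc]]
    unfolding bounded_real by (meson abs_le_D1 image_eqI)
  have bound_C: "\<bar>E' s\<bar> \<le> C * E s" if "s \<in> {a..b}" for s
  proof -
    have "s \<in> I" using sub that by blast
    then have "L s * E s \<le> C * E s"
      using nonneg C that by (intro mult_right_mono) auto
    then show ?thesis using bound[OF \<open>s \<in> I\<close>] by linarith
  qed
  have deriv_ab: "\<And>s. s \<in> {a..b} \<Longrightarrow> (E has_real_derivative E' s) (at s)"
    using deriv sub by blast
  show ?thesis
  proof (cases "t0 \<le> t")
    case True
    then have "a = t0" "b = t" unfolding a_def b_def by auto
    with True show ?thesis
      using zero_if_derivative_le_forward[of a b E E' C] deriv_ab bound_C nonneg t \<open>E t0 = 0\<close>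
      by (simp add: abs_le_iff)
  next
    case False
    then have "a = t" "b = t0" unfolding a_def b_def by auto
    with False show ?thesis
      using zero_if_derivative_ge_backward[of a b E E' C] deriv_ab bound_C nonneg t \<open>E t0 = 0\<close>
      by (simp add: abs_le_iff)
  qed
qed

lemma abs_mult_le_half_sum_squares:
  fixes a b c d :: real
  assumes "\<bar>c\<bar> \<le> d"
  shows "\<bar>a * b * c\<bar> \<le> d / 2 * (a^2 + b^2)"
proof -
  have "\<bar>a * b\<bar> \<le> (a^2 + b^2) / 2"
    using sum_squares_bound[of "\<bar>a\<bar>" "\<bar>b\<bar>"] by (simp add: abs_mult)
  then have "\<bar>a * b\<bar> * \<bar>c\<bar> \<le> (a^2 + b^2) / 2 * d"
    using assms by (intro mult_mono) auto
  then show ?thesis by (simp add: abs_mult mult.commute)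
qed

lemma quadratic_if_second_derivative_const:
  fixes u w :: "real \<Rightarrow> real"
  assumes I: "is_interval I" and t0: "t0 \<in> I"
    and du: "\<And>s. s \<in> I \<Longrightarrow> (u has_real_derivative w s) (at s)"
    and dw: "\<And>s. s \<in> I \<Longrightarrow> (w has_real_derivative 2 * a) (at s)"
  shows "\<exists>b c. (\<forall>s\<in>I. u s = a * s^2 + b * s + c) \<and> b^2 - 4 * a * c = w t0^2 - 4 * a * u t0"
proof -
  define b where "b = w t0 - 2 * a * t0"
  have w_eq: "w s = 2 * a * s + b" if "s \<in> I" for s
  proof -
    have "((\<lambda>s. w s - 2 * a * s) has_real_derivative 0) (at s)" if "s \<in> I" for s
      using dw[OF that] by (auto intro!: derivative_eq_intros)
    from is_interval_derivative_zero_eq[OF I this t0 \<open>s \<in> I\<close>] show ?thesis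
      unfolding b_def by simp
  qed
  define c where "c = u t0 - a * t0^2 - b * t0"
  have "u s = a * s^2 + b * s + c" if "s \<in> I" for s
  proof -
    have "((\<lambda>s. u s - a * s^2 - b * s) has_real_derivative 0) (at s)" if "s \<in> I" for s
      using du[OF that] w_eq[OF that] by (auto intro!: derivative_eq_intros)
    from is_interval_derivative_zero_eq[OF I this t0 \<open>s \<in> I\<close>] show ?thesis
      unfolding c_def by simp
  qed
  moreover have "b^2 - 4 * a * c = w t0^2 - 4 * a * u t0"
    unfolding b_def c_def by (simp add: algebra_simps power2_eq_square)
  ultimately show ?thesis by blast
qed

lemma inverse_square_potential_radius_squared_quadratic:
  fixes x y vx vy :: "real \<Rightarrow> real" and k :: real
  assumes I: "is_interval I" and t0: "t0 \<in> I"
    and pos: "\<And>s. s \<in> I \<Longrightarrow> x s^2 + y s^2 > 0"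
    and dx: "\<And>s. s \<in> I \<Longrightarrow> (x has_real_derivative vx s) (at s)"
    and dy: "\<And>s. s \<in> I \<Longrightarrow> (y has_real_derivative vy s) (at s)"
    and dvx: "\<And>s. s \<in> I \<Longrightarrow> (vx has_real_derivative - 2 * k * x s / (x s^2 + y s^2)^2) (at s)"
    and dvy: "\<And>s. s \<in> I \<Longrightarrow> (vy has_real_derivative - 2 * k * y s / (x s^2 + y s^2)^2) (at s)"
    and energy: "(vx t0^2 + vy t0^2) / 2 - k / (x t0^2 + y t0^2) = h"
  shows "\<exists>b c. (\<forall>s\<in>I. x s^2 + y s^2 = 2 * h * s^2 + b * s + c) \<and>
    b^2 - 8 * h * c = 8 * k - 4 * (x t0 * vy t0 - y t0 * vx t0)^2"
proof -
  define u where "u s = x s^2 + y s^2" for s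
  define w where "w s = 2 * (x s * vx s + y s * vy s)" for s
  define e where "e s = (vx s^2 + vy s^2) / 2 - k / u s" for s
  have u_pos: "u s > 0" if "s \<in> I" for s
    unfolding u_def by (rule pos[OF that])
  have dvx': "(vx has_real_derivative - 2 * k * x s / u s ^ 2) (at s)"
    and dvy': "(vy has_real_derivative - 2 * k * y s / u s ^ 2) (at s)" if "s \<in> I" for s
    unfolding u_def using dvx dvy that by auto
  have du: "(u has_real_derivative w s) (at s)" if "s \<in> I" for s
    unfolding u_def[abs_def] w_def
    by (auto intro!: derivative_eq_intros dx dy that simp: algebra_simps)
  have de: "(e has_real_derivative 0) (at s)" if "s \<in> I" for s
  proof -
    have "u s \<noteq> 0" using u_pos[OF that] by simp
    have "(e has_real_derivative vx s * (- 2 * k * x s / u s ^ 2) + vy s * (- 2 * k * y s / u s ^ 2)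
        + k * w s / (u s)^2) (at s)"
      unfolding e_def[abs_def]
      by (auto intro!: derivative_eq_intros dvx' dvy' du that
          simp: \<open>u s \<noteq> 0\<close> field_simps power2_eq_square)
    then show ?thesis
      by (rule DERIV_cong) (simp add: w_def algebra_simps add_divide_distrib)
  qed
  have e_eq: "e s = h" if "s \<in> I" for s
    using is_interval_derivative_zero_eq[OF I de t0 that] unfolding e_def u_def energy by simp
  have dw: "(w has_real_derivative 2 * (2 * h)) (at s)" if "s \<in> I" for s
  proof -
    let ?F = "\<lambda>z. z * (- 2 * k * z / u s ^ 2)"
    have "?F (x s) + ?F (y s) = - 2 * k * (x s^2 + y s^2) / u s ^ 2"
      by (simp add: algebra_simps add_divide_distrib[symmetric] power2_eq_square)
    also have "\<dots> = - 2 * k / u s"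
      using u_pos[OF that] unfolding u_def by (simp add: power2_eq_square)
    finally have force: "?F (x s) + ?F (y s) = - 2 * k / u s" .
    have "(w has_real_derivative 2 * (vx s * vx s + ?F (x s) + (vy s * vy s + ?F (y s)))) (at s)"
      unfolding w_def[abs_def]
      by (auto intro!: derivative_eq_intros dx dy dvx' dvy' that simp: algebra_simps)
    moreover have "2 * (vx s * vx s + ?F (x s) + (vy s * vy s + ?F (y s)))
        = 2 * (vx s^2 + vy s^2) + 2 * (?F (x s) + ?F (y s))"
      by (simp add: algebra_simps power2_eq_square)
    also have "\<dots> = 4 * e s"
      by (simp only: force) (simp add: e_def algebra_simps)
    also have "\<dots> = 2 * (2 * h)"
      using e_eq[OF that] by simp
    ultimately show ?thesis
      by (rule DERIV_cong)
  qed
  obtain b c where "\<forall>s\<in>I. u s = 2 * h * s^2 + b * s + c"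
    and "b^2 - 4 * (2 * h) * c = w t0^2 - 4 * (2 * h) * u t0"
    using quadratic_if_second_derivative_const[OF I t0 du dw] by blast
  moreover have "w t0^2 - 4 * (2 * h) * u t0
      = 4 * (x t0 * vx t0 + y t0 * vy t0)^2 - 4 * u t0 * (vx t0^2 + vy t0^2) + 8 * k"
    using u_pos[OF t0] unfolding w_def energy[symmetric] u_def[symmetric]
    by (simp add: field_simps power2_eq_square)
  moreover have "\<dots> = 8 * k - 4 * (x t0 * vy t0 - y t0 * vx t0)^2"
    unfolding u_def by (simp add: algebra_simps power2_eq_square)
  ultimately show ?thesis
    unfolding u_def by auto
qed

lemma lies_on_conic_if_radius_squared_quadratic:
  fixes G :: "(real \<times> real) set"
  assumes "\<And>t r. (t, r) \<in> G \<Longrightarrow> r^2 = 2 * h * t^2 + b * t + c"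
    and "b^2 - 8 * h * c \<noteq> 0" and "G \<noteq> {}"
  shows "(h > 0 \<longrightarrow> lies_on_hyperbola G) \<and> (h < 0 \<longrightarrow> lies_on_ellipse G)
    \<and> (h = 0 \<longrightarrow> lies_on_parabola G)"
proof -
  let ?conic = "conic_set (-2 * h) 0 1 (-b) 0 (-c)"
  have G_sub: "G \<subseteq> ?conic"
    using assms(1) unfolding conic_set_def by auto
  have det: "conic_det (-2 * h) 0 1 (-b) 0 (-c) \<noteq> 0"
    using assms(2) unfolding conic_det_def by (simp add: algebra_simps power2_eq_square)
  show ?thesis
  proof (intro conjI impI)
    assume "h > 0"
    then show "lies_on_hyperbola G"
      using G_sub det unfolding lies_on_hyperbola_def is_hyperbola_def by force
  next
    assume "h < 0"
    moreover have "?conic \<noteq> {}"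
      using G_sub assms(3) by blast
    ultimately show "lies_on_ellipse G"
      using G_sub det unfolding lies_on_ellipse_def is_ellipse_def by force
  next
    assume "h = 0"
    then show "lies_on_parabola G"
      using G_sub det unfolding lies_on_parabola_def is_parabola_def by force
  qed
qed

definition KH_PX :: "real^3 \<Rightarrow> real^3 \<Rightarrow> real" where
  "KH_PX q p = p$1 - q$2 * p$3 / 2"

definition KH_PY :: "real^3 \<Rightarrow> real^3 \<Rightarrow> real" where
  "KH_PY q p = p$2 + q$1 * p$3 / 2"

definition koranyi_gauge4 :: "real^3 \<Rightarrow> real" where
  "koranyi_gauge4 q = (q$1^2 + q$2^2)^2 + 16 * q$3^2"

lemma koranyi_gauge4_pos:
  assumes "q \<noteq> 0"
  shows "koranyi_gauge4 q > 0"
proof -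
  have "q$1 \<noteq> 0 \<or> q$2 \<noteq> 0 \<or> q$3 \<noteq> 0"
    using assms by (auto simp: vec_eq_iff forall_3)
  then show ?thesis
    unfolding koranyi_gauge4_def
    by (auto intro: add_pos_nonneg add_nonneg_pos simp: add_pos_pos sum_power2_gt_zero_iff)
qed

lemma KH_eq:
  "KH q p = (KH_PX q p ^ 2 + KH_PY q p ^ 2) / 2 - 1 / (8 * pi * sqrt (koranyi_gauge4 q))"
  by (simp add: KH_def KH_PX_def KH_PY_def koranyi_gauge4_def Let_def)

lemma KH_partial_px:
  "((\<lambda>s. KH q (p + s *\<^sub>R axis 1 1)) has_real_derivative KH_PX q p) (at 0)"
proof -
  have "(\<lambda>s. KH q (p + s *\<^sub>R axis 1 1)) = (\<lambda>s. ((KH_PX q p + s)^2 + KH_PY q p ^ 2) / 2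
      - 1 / (8 * pi * sqrt (koranyi_gauge4 q)))"
    by (simp add: KH_eq KH_PX_def KH_PY_def axis_def algebra_simps add_divide_distrib)
  then show ?thesis
    by (auto intro!: derivative_eq_intros)
qed

lemma KH_partial_py:
  "((\<lambda>s. KH q (p + s *\<^sub>R axis 2 1)) has_real_derivative KH_PY q p) (at 0)"
proof -
  have "(\<lambda>s. KH q (p + s *\<^sub>R axis 2 1)) = (\<lambda>s. (KH_PX q p ^ 2 + (KH_PY q p + s)^2) / 2
      - 1 / (8 * pi * sqrt (koranyi_gauge4 q)))"
    by (simp add: KH_eq KH_PX_def KH_PY_def axis_def algebra_simps add_divide_distrib)
  then show ?thesis
    by (auto intro!: derivative_eq_intros)
qed

lemma KH_partial_pz:
  "((\<lambda>s. KH q (p + s *\<^sub>R axis 3 1)) has_real_derivative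
     (q$1 * KH_PY q p - q$2 * KH_PX q p) / 2) (at 0)"
proof -
  have "(\<lambda>s. KH q (p + s *\<^sub>R axis 3 1)) = (\<lambda>s. ((KH_PX q p - q$2 * s / 2)^2
      + (KH_PY q p + q$1 * s / 2)^2) / 2 - 1 / (8 * pi * sqrt (koranyi_gauge4 q)))"
    by (simp add: KH_eq KH_PX_def KH_PY_def axis_def algebra_simps add_divide_distrib)
  then show ?thesis
    by (auto intro!: derivative_eq_intros simp: field_simps)
qed

lemma KH_partial_x:
  assumes "koranyi_gauge4 q > 0"
  shows "((\<lambda>s. KH (q + s *\<^sub>R axis 1 1) p) has_real_derivative
     KH_PY q p * p$3 / 2 + q$1 * (q$1^2 + q$2^2) / (4 * pi * sqrt (koranyi_gauge4 q) ^ 3)) (at 0)"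
proof -
  have "(\<lambda>s. KH (q + s *\<^sub>R axis 1 1) p) = (\<lambda>s. (KH_PX q p ^ 2 + (KH_PY q p + s * p$3 / 2)^2) / 2
      - 1 / (8 * pi * sqrt (((q$1 + s)^2 + q$2^2)^2 + 16 * q$3^2)))"
    by (simp add: KH_eq KH_PX_def KH_PY_def koranyi_gauge4_def axis_def algebra_simps add_divide_distrib)
  moreover have "sqrt (koranyi_gauge4 q) ^ 3 = koranyi_gauge4 q * sqrt (koranyi_gauge4 q)"
    using assms by (simp add: power3_eq_cube)
  ultimately show ?thesis
    using assms unfolding koranyi_gauge4_def
    by (auto intro!: derivative_eq_intros) (simp add: field_simps)
qed

lemma KH_partial_y:
  assumes "koranyi_gauge4 q > 0"
  shows "((\<lambda>s. KH (q + s *\<^sub>R axis 2 1) p) has_real_derivative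
     - KH_PX q p * p$3 / 2 + q$2 * (q$1^2 + q$2^2) / (4 * pi * sqrt (koranyi_gauge4 q) ^ 3)) (at 0)"
proof -
  have "(\<lambda>s. KH (q + s *\<^sub>R axis 2 1) p) = (\<lambda>s. ((KH_PX q p - s * p$3 / 2)^2 + KH_PY q p ^ 2) / 2
      - 1 / (8 * pi * sqrt ((q$1^2 + (q$2 + s)^2)^2 + 16 * q$3^2)))"
    by (simp add: KH_eq KH_PX_def KH_PY_def koranyi_gauge4_def axis_def algebra_simps add_divide_distrib)
  moreover have "sqrt (koranyi_gauge4 q) ^ 3 = koranyi_gauge4 q * sqrt (koranyi_gauge4 q)"
    using assms by (simp add: power3_eq_cube)
  ultimately show ?thesis
    using assms unfolding koranyi_gauge4_def
    by (auto intro!: derivative_eq_intros) (simp add: field_simps)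
qed

lemma KH_partial_z:
  assumes "koranyi_gauge4 q > 0"
  shows "((\<lambda>s. KH (q + s *\<^sub>R axis 3 1) p) has_real_derivative
     2 * q$3 / (pi * sqrt (koranyi_gauge4 q) ^ 3)) (at 0)"
proof -
  have "(\<lambda>s. KH (q + s *\<^sub>R axis 3 1) p) = (\<lambda>s. (KH_PX q p ^ 2 + KH_PY q p ^ 2) / 2
      - 1 / (8 * pi * sqrt ((q$1^2 + q$2^2)^2 + 16 * (q$3 + s)^2)))"
    by (simp add: KH_eq KH_PX_def KH_PY_def koranyi_gauge4_def axis_def algebra_simps add_divide_distrib)
  moreover have "sqrt (koranyi_gauge4 q) ^ 3 = koranyi_gauge4 q * sqrt (koranyi_gauge4 q)"
    using assms by (simp add: power3_eq_cube)
  ultimately show ?thesis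
    using assms unfolding koranyi_gauge4_def
    by (auto intro!: derivative_eq_intros) (simp add: field_simps)
qed

lemma KH_solution_hamilton_equations:
  assumes sol: "KH_solution I q p" and t: "t \<in> I"
  defines "a \<equiv> 4 * pi * sqrt (koranyi_gauge4 (q t)) ^ 3"
  shows "((\<lambda>t. q t $ 1) has_real_derivative KH_PX (q t) (p t)) (at t)"
    and "((\<lambda>t. q t $ 2) has_real_derivative KH_PY (q t) (p t)) (at t)"
    and "((\<lambda>t. q t $ 3) has_real_derivative
           (q t$1 * KH_PY (q t) (p t) - q t$2 * KH_PX (q t) (p t)) / 2) (at t)"
    and "((\<lambda>t. p t $ 1) has_real_derivative
           - (KH_PY (q t) (p t) * p t$3 / 2 + q t$1 * (q t$1^2 + q t$2^2) / a)) (at t)"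
    and "((\<lambda>t. p t $ 2) has_real_derivative
           - (- KH_PX (q t) (p t) * p t$3 / 2 + q t$2 * (q t$1^2 + q t$2^2) / a)) (at t)"
    and "((\<lambda>t. p t $ 3) has_real_derivative - (8 * q t$3 / a)) (at t)"
proof -
  have ham: "hamiltonian_solution KH I q p" and "koranyi_gauge4 (q t) > 0"
    using sol t koranyi_gauge4_pos unfolding KH_solution_def by auto
  note eqs = hamiltonian_solution_coordinate_derivatives[OF ham t]
  show "((\<lambda>t. q t $ 1) has_real_derivative KH_PX (q t) (p t)) (at t)"
    "((\<lambda>t. q t $ 2) has_real_derivative KH_PY (q t) (p t)) (at t)"
    "((\<lambda>t. q t $ 3) has_real_derivative
       (q t$1 * KH_PY (q t) (p t) - q t$2 * KH_PX (q t) (p t)) / 2) (at t)"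
    "((\<lambda>t. p t $ 1) has_real_derivative
       - (KH_PY (q t) (p t) * p t$3 / 2 + q t$1 * (q t$1^2 + q t$2^2) / a)) (at t)"
    "((\<lambda>t. p t $ 2) has_real_derivative
       - (- KH_PX (q t) (p t) * p t$3 / 2 + q t$2 * (q t$1^2 + q t$2^2) / a)) (at t)"
    using eqs[OF KH_partial_px KH_partial_x] eqs[OF KH_partial_py KH_partial_y]
      eqs[OF KH_partial_pz KH_partial_z] \<open>koranyi_gauge4 (q t) > 0\<close>
    unfolding a_def by auto
  have "2 * q t$3 / (pi * sqrt (koranyi_gauge4 (q t)) ^ 3) = 8 * q t$3 / a"
    unfolding a_def by simp
  then show "((\<lambda>t. p t $ 3) has_real_derivative - (8 * q t$3 / a)) (at t)"
    using eqs(2)[OF KH_partial_pz KH_partial_z] \<open>koranyi_gauge4 (q t) > 0\<close> by simp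
qed

lemma KH_solution_angular_momentum_eq:
  assumes sol: "KH_solution I q p" and "t0 \<in> I" "t \<in> I"
  shows "q t$1 * p t$2 - q t$2 * p t$1 = q t0$1 * p t0$2 - q t0$2 * p t0$1"
proof (rule is_interval_derivative_zero_eq[where f = "\<lambda>t. q t$1 * p t$2 - q t$2 * p t$1"])
  fix s assume "s \<in> I"
  note eqs = KH_solution_hamilton_equations[OF sol this]
  show "((\<lambda>t. q t$1 * p t$2 - q t$2 * p t$1) has_real_derivative 0) (at s)"
    by (auto intro!: derivative_eq_intros eqs) (simp add: KH_PX_def KH_PY_def field_simps)
qed (use sol assms in \<open>auto simp: KH_solution_def\<close>)

lemma KH_solution_invariant_M:
  assumes sol: "KH_solution I q p" and t0: "t0 \<in> I" and M0: "inM (q t0) (p t0)" and t: "t \<in> I"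
  shows "inM (q t) (p t)"
proof -
  have I: "is_interval I" and gauge_pos: "\<And>s. s \<in> I \<Longrightarrow> koranyi_gauge4 (q s) > 0"
    using sol koranyi_gauge4_pos unfolding KH_solution_def by auto
  have ptheta: "q s$1 * p s$2 - q s$2 * p s$1 = 0" if "s \<in> I" for s
    using KH_solution_angular_momentum_eq[OF sol t0 that] M0 unfolding inM_def by simp
  define a where "a s = 4 * pi * sqrt (koranyi_gauge4 (q s)) ^ 3" for s
  define E where "E s = (q s$3)^2 + (p s$3)^2" for s
  define E' where "E' s = q s$3 * p s$3 * ((q s$1^2 + q s$2^2) / 2 - 16 / a s)" for s
  define L where "L s = ((q s$1^2 + q s$2^2) / 2 + 16 / a s) / 2" for s
  have a_pos: "a s > 0" if "s \<in> I" for s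
    using gauge_pos[OF that] unfolding a_def by simp
  have E_deriv: "(E has_real_derivative E' s) (at s)" if "s \<in> I" for s
  proof -
    note eqs = KH_solution_hamilton_equations[OF sol that]
    have "q s$1 * KH_PY (q s) (p s) - q s$2 * KH_PX (q s) (p s)
        = q s$1 * p s$2 - q s$2 * p s$1 + p s$3 * (q s$1^2 + q s$2^2) / 2"
      unfolding KH_PX_def KH_PY_def by (simp add: field_simps power2_eq_square)
    then have kin: "q s$1 * KH_PY (q s) (p s) - q s$2 * KH_PX (q s) (p s)
        = p s$3 * (q s$1^2 + q s$2^2) / 2"
      using ptheta[OF that] by simp
    have "(E has_real_derivative 2 * q s$3 * ((q s$1 * KH_PY (q s) (p s)
        - q s$2 * KH_PX (q s) (p s)) / 2) + 2 * p s$3 * - (8 * q s$3 / a s)) (at s)"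
      unfolding E_def a_def by (auto intro!: derivative_eq_intros eqs)
    then show ?thesis
      by (rule DERIV_cong) (simp only: kin E'_def, simp add: field_simps)
  qed
  have E'_bound: "\<bar>E' s\<bar> \<le> L s * E s" if "s \<in> I" for s
  proof -
    have "\<bar>x / 2 - y\<bar> \<le> x / 2 + y" if "x \<ge> 0" "y > 0" for x y :: real
      using that by linarith
    then have "\<bar>(q s$1^2 + q s$2^2) / 2 - 16 / a s\<bar> \<le> (q s$1^2 + q s$2^2) / 2 + 16 / a s"
      using a_pos[OF that] by simp
    then show ?thesis
      unfolding E'_def L_def E_def by (rule abs_mult_le_half_sum_squares)
  qed
  have L_cont: "continuous_on I L"
  proof (intro continuous_at_imp_continuous_on ballI)
    fix s assume "s \<in> I"
    note eqs = KH_solution_hamilton_equations[OF sol \<open>s \<in> I\<close>]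
    note q_cont = DERIV_isCont[OF eqs(1)] DERIV_isCont[OF eqs(2)] DERIV_isCont[OF eqs(3)]
    have "pi * sqrt (koranyi_gauge4 (q s)) ^ 3 \<noteq> 0"
      using gauge_pos[OF \<open>s \<in> I\<close>] by simp
    then show "isCont L s"
      unfolding L_def a_def koranyi_gauge4_def by (intro continuous_intros q_cont) auto
  qed
  have "E t = 0"
    using zero_if_abs_derivative_le[OF I t0 t _ _ E_deriv E'_bound L_cont] M0
    unfolding E_def inM_def by simp
  then show ?thesis
    using ptheta[OF t] unfolding E_def inM_def by (simp add: add_nonneg_eq_0_iff)
qed

lemma KH_solution_in_M_radius_squared_quadratic:
  assumes sol: "KH_solution I q p" and M: "\<forall>t\<in>I. inM (q t) (p t)" and t0: "t0 \<in> I"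
  defines "h \<equiv> KH (q t0) (p t0)"
  shows "\<exists>b c. (\<forall>s\<in>I. (q s$1)^2 + (q s$2)^2 = 2 * h * s^2 + b * s + c) \<and> b^2 - 8 * h * c = 1 / pi"
proof -
  have I: "is_interval I"
    using sol by (simp add: KH_solution_def)
  have planar: "q s$3 = 0" "p s$3 = 0" "q s$1 * p s$2 - q s$2 * p s$1 = 0" if "s \<in> I" for s
    using M that by (auto simp: inM_def)
  have pos: "q s$1^2 + q s$2^2 > 0" and
    gauge: "sqrt (koranyi_gauge4 (q s)) = q s$1^2 + q s$2^2" if "s \<in> I" for s
  proof -
    have "koranyi_gauge4 (q s) = (q s$1^2 + q s$2^2)^2"
      using planar[OF that] by (simp add: koranyi_gauge4_def)
    moreover have "koranyi_gauge4 (q s) > 0"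
      using koranyi_gauge4_pos sol that by (auto simp: KH_solution_def)
    ultimately show "q s$1^2 + q s$2^2 > 0" "sqrt (koranyi_gauge4 (q s)) = q s$1^2 + q s$2^2"
      by (auto simp: add_pos_nonneg sum_power2_gt_zero_iff)
  qed
  let ?k = "1 / (8 * pi)"
  note eqs = KH_solution_hamilton_equations[OF sol]
  have "\<exists>b c. (\<forall>s\<in>I. (q s$1)^2 + (q s$2)^2 = 2 * h * s^2 + b * s + c) \<and>
      b^2 - 8 * h * c = 8 * ?k - 4 * (q t0$1 * p t0$2 - q t0$2 * p t0$1)^2"
  proof (rule inverse_square_potential_radius_squared_quadratic[where x = "\<lambda>t. q t$1"
        and y = "\<lambda>t. q t$2" and vx = "\<lambda>t. p t$1" and vy = "\<lambda>t. p t$2", OF I t0 pos])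
    fix s assume "s \<in> I"
    show "((\<lambda>t. q t$1) has_real_derivative p s$1) (at s)"
      "((\<lambda>t. q t$2) has_real_derivative p s$2) (at s)"
      using eqs(1,2)[OF \<open>s \<in> I\<close>] planar[OF \<open>s \<in> I\<close>] by (simp_all add: KH_PX_def KH_PY_def)
    show "((\<lambda>t. p t$1) has_real_derivative - 2 * ?k * q s$1 / (q s$1^2 + q s$2^2)^2) (at s)"
      "((\<lambda>t. p t$2) has_real_derivative - 2 * ?k * q s$2 / (q s$1^2 + q s$2^2)^2) (at s)"
      using eqs(4,5)[OF \<open>s \<in> I\<close>] planar[OF \<open>s \<in> I\<close>] gauge[OF \<open>s \<in> I\<close>] pos[OF \<open>s \<in> I\<close>]
      by (auto elim!: DERIV_cong simp: power3_eq_cube power2_eq_square)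
  next
    show "((p t0$1)^2 + (p t0$2)^2) / 2 - ?k / ((q t0$1)^2 + (q t0$2)^2) = h"
      using planar[OF t0] gauge[OF t0] unfolding h_def KH_eq KH_PX_def KH_PY_def by simp
  qed
  then show ?thesis
    using planar(3)[OF t0] by simp
qed

theorem mainTheorem5:
  shows "(\<forall>I q p t0. KH_solution I q p \<and> t0 \<in> I \<and> inM (q t0) (p t0) \<longrightarrow>
            (\<forall>t\<in>I. inM (q t) (p t)))
       \<and> (\<forall>I q p t0 (h::real). KH_solution I q p \<and> (\<forall>t\<in>I. inM (q t) (p t)) \<and>
            t0 \<in> I \<and> KH (q t0) (p t0) = h \<longrightarrow>
            (let G = (\<lambda>t. (t, sqrt ((q t $ 1)^2 + (q t $ 2)^2))) ` I in
              (h > 0 \<longrightarrow> lies_on_hyperbola G) \<and>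
              (h < 0 \<longrightarrow> lies_on_ellipse G) \<and>
              (h = 0 \<longrightarrow> lies_on_parabola G)))"
proof (intro conjI allI impI ballI)
  fix I q p t0 t
  assume "KH_solution I q p \<and> t0 \<in> I \<and> inM (q t0) (p t0)" "t \<in> I"
  then show "inM (q t) (p t)"
    using KH_solution_invariant_M by blast
next
  fix I q p t0 and h :: real
  assume "KH_solution I q p \<and> (\<forall>t\<in>I. inM (q t) (p t)) \<and> t0 \<in> I \<and> KH (q t0) (p t0) = h"
  then obtain b c where radius: "\<forall>s\<in>I. (q s$1)^2 + (q s$2)^2 = 2 * h * s^2 + b * s + c"
    and "b^2 - 8 * h * c = 1 / pi" and "t0 \<in> I"
    using KH_solution_in_M_radius_squared_quadratic by blast
  moreover have "(sqrt ((q s$1)^2 + (q s$2)^2))^2 = 2 * h * s^2 + b * s + c" if "s \<in> I" for s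
    using that by (simp add: radius[rule_format, symmetric])
  ultimately show "let G = (\<lambda>t. (t, sqrt ((q t $ 1)^2 + (q t $ 2)^2))) ` I in
      (h > 0 \<longrightarrow> lies_on_hyperbola G) \<and> (h < 0 \<longrightarrow> lies_on_ellipse G) \<and>
      (h = 0 \<longrightarrow> lies_on_parabola G)"
    unfolding Let_def by (intro lies_on_conic_if_radius_squared_quadratic[of _ h b c]) auto
qed

end
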